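(* Suppose the Turing degree $\mathbf d$ is loquaciously high for isomorphism. Then: (1) there are $D\in\mathbf d$ and Turing functionals $\Phi,\Psi$ with $\Phi^D(i,j,n)$ and $\Psi^D(i,j,n)$ convergent for all $i,j,n$, such that whenever $\mathcal M_i\cong\mathcal M_j$, the map $\Phi^D(i,j,\cdot)$ is an isomorphism from $\mathcal M_i$ onto $\mathcal M_j$ and $\Psi^D(i,j,\cdot)$ is its inverse; (2) there are $D\in\mathbf d$ and a Turing functional $\Theta$ witnessing that $\mathbf d$ is loquaciously high for isomorphism such that moreover, whenever $\mathcal M_i\cong\mathcal M_j$, the map $\Theta^D(j,i,\cdot)$ is the inverse of $\Theta^D(i,j,\cdot)$.
   Context: Fix a standard effective listing $(\mathcal M_i:i\in\omega)$ of all computable structures (in computable languages). A degree $\mathbf d$ is loquaciously high for isomorphism if there are $D\in\mathbf d$ and a Turing functional $\Phi$ such that $\Phi^D(i,j,n)$ converges for all $i,j,n$, and whenever $\mathcal M_i\cong\mathcal M_j$, the function $n\mapsto\Phi^D(i,j,n)$ is an isomorphism from $\mathcal M_i$ onto $\mathcal M_j$. *)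

theory Defs
  imports Main "HOL-Library.Nat_Bijection"
begin

text \<open>Multiple arguments are coded with the Cantor pairing prod_encode.
  A Turing functional is such a term; Phi with oracle D is its semantics.\<close>

datatype recf =
    ZeroF | SucF | FstF | SndF | OracleF
  | CompF recf recf
  | PairF recf recf
  | RecF recf recf
  | MuF recf

inductive eval :: "nat set \<Rightarrow> recf \<Rightarrow> nat \<Rightarrow> nat \<Rightarrow> bool" for D :: "nat set" where
  ev_zero: "eval D ZeroF x 0"
| ev_suc: "eval D SucF x (Suc x)"
| ev_fst: "eval D FstF x (fst (prod_decode x))"
| ev_snd: "eval D SndF x (snd (prod_decode x))"
| ev_orc: "eval D OracleF x (if x \<in> D then 1 else 0)"
| ev_comp: "eval D g x y \<Longrightarrow> eval D f y z \<Longrightarrow> eval D (CompF f g) x z"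
| ev_pair: "eval D f x y \<Longrightarrow> eval D g x z \<Longrightarrow> eval D (PairF f g) x (prod_encode (y, z))"
| ev_rec0: "eval D f p y \<Longrightarrow> eval D (RecF f g) (prod_encode (p, 0)) y"
| ev_recS: "eval D (RecF f g) (prod_encode (p, n)) y \<Longrightarrow>
            eval D g (prod_encode (p, prod_encode (n, y))) z \<Longrightarrow>
            eval D (RecF f g) (prod_encode (p, Suc n)) z"
| ev_mu: "eval D f (prod_encode (p, n)) 0 \<Longrightarrow>
          (\<forall>m<n. \<exists>y. y \<noteq> 0 \<and> eval D f (prod_encode (p, m)) y) \<Longrightarrow>
          eval D (MuF f) p n"

definition converges :: "nat set \<Rightarrow> recf \<Rightarrow> nat \<Rightarrow> bool" where
  "converges D f x \<longleftrightarrow> (\<exists>y. eval D f x y)"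

definition value_of :: "nat set \<Rightarrow> recf \<Rightarrow> nat \<Rightarrow> nat" where
  "value_of D f x = (THE y. eval D f x y)"

definition code3 :: "nat \<Rightarrow> nat \<Rightarrow> nat \<Rightarrow> nat" where
  "code3 i j n = prod_encode (i, prod_encode (j, n))"

definition total3 :: "nat set \<Rightarrow> recf \<Rightarrow> bool" where
  "total3 D \<Phi> \<longleftrightarrow> (\<forall>i j n. converges D \<Phi> (code3 i j n))"

definition app3 :: "nat set \<Rightarrow> recf \<Rightarrow> nat \<Rightarrow> nat \<Rightarrow> nat \<Rightarrow> nat" where
  "app3 D \<Phi> i j n = value_of D \<Phi> (code3 i j n)"

definition turing_le :: "nat set \<Rightarrow> nat set \<Rightarrow> bool" where
  "turing_le A B \<longleftrightarrow> (\<exists>f. \<forall>x. eval B f x (if x \<in> A then 1 else 0))"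

definition turing_degree_of :: "nat set \<Rightarrow> nat set set" where
  "turing_degree_of A = {B. turing_le A B \<and> turing_le B A}"

definition is_turing_degree :: "nat set set \<Rightarrow> bool" where
  "is_turing_degree d \<longleftrightarrow> (\<exists>A. d = turing_degree_of A)"

lemma prod_decode_le1: "fst (prod_decode r) \<le> r"
  by (metis le_prod_encode_1 prod.collapse prod_decode_inverse)

lemma prod_decode_le2: "snd (prod_decode r) \<le> r"
  by (metis le_prod_encode_2 prod.collapse prod_decode_inverse)

function recf_of_nat :: "nat \<Rightarrow> recf" where
  "recf_of_nat n =
     (if n mod 9 = 0 then ZeroF
      else if n mod 9 = 1 then SucF
      else if n mod 9 = 2 then FstF
      else if n mod 9 = 3 then SndF
      else if n mod 9 = 4 then OracleF
      else if n mod 9 = 5 then CompF (recf_of_nat (fst (prod_decode (n div 9))))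
                                     (recf_of_nat (snd (prod_decode (n div 9))))
      else if n mod 9 = 6 then PairF (recf_of_nat (fst (prod_decode (n div 9))))
                                     (recf_of_nat (snd (prod_decode (n div 9))))
      else if n mod 9 = 7 then RecF (recf_of_nat (fst (prod_decode (n div 9))))
                                    (recf_of_nat (snd (prod_decode (n div 9))))
      else MuF (recf_of_nat (n div 9)))"
  by auto
termination
proof (relation "measure id")
  have lt: "n div 9 < n" if "n mod 9 \<noteq> 0" for n :: nat
  proof -
    have "n > 0" using that by (cases n) auto
    then show ?thesis by simp
  qed
  show "wf (measure id)" by simp
  fix n :: nat
  assume a: "n mod 9 \<noteq> 0"
  then show "(fst (prod_decode (n div 9)), n) \<in> measure id"
    using lt[OF a] prod_decode_le1[of "n div 9"] by simp
  show "(snd (prod_decode (n div 9)), n) \<in> measure id"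
    using lt[OF a] prod_decode_le2[of "n div 9"] by simp
  show "(fst (prod_decode (n div 9)), n) \<in> measure id"
    using lt[OF a] prod_decode_le1[of "n div 9"] by simp
  show "(snd (prod_decode (n div 9)), n) \<in> measure id"
    using lt[OF a] prod_decode_le2[of "n div 9"] by simp
  show "(fst (prod_decode (n div 9)), n) \<in> measure id"
    using lt[OF a] prod_decode_le1[of "n div 9"] by simp
  show "(snd (prod_decode (n div 9)), n) \<in> measure id"
    using lt[OF a] prod_decode_le2[of "n div 9"] by simp
  show "(n div 9, n) \<in> measure id" using lt[OF a] by simp
qed

text \<open>Symbol k of the language: None = not in the language;
  Some (True, a) = relation symbol of arity a; Some (False, a) = function
  symbol of arity a (constants are 0-ary function symbols).\<close>

record struc =
  sig :: "nat \<Rightarrow> (bool \<times> nat) option"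
  rel :: "nat \<Rightarrow> nat list \<Rightarrow> bool"
  fn  :: "nat \<Rightarrow> nat list \<Rightarrow> nat"

definition is_iso :: "(nat \<Rightarrow> nat) \<Rightarrow> struc \<Rightarrow> struc \<Rightarrow> bool" where
  "is_iso f A B \<longleftrightarrow>
     sig A = sig B \<and> bij f \<and>
     (\<forall>k xs. sig A k = Some (True, length xs) \<longrightarrow> (rel A k xs \<longleftrightarrow> rel B k (map f xs))) \<and>
     (\<forall>k xs. sig A k = Some (False, length xs) \<longrightarrow> f (fn A k xs) = fn B k (map f xs))"

definition isomorphic :: "struc \<Rightarrow> struc \<Rightarrow> bool" where
  "isomorphic A B \<longleftrightarrow> (\<exists>f. is_iso f A B)"

definition sig_decode :: "nat \<Rightarrow> (bool \<times> nat) option" where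
  "sig_decode c = (case c of 0 \<Rightarrow> None
                    | Suc m \<Rightarrow> Some (fst (prod_decode m) = 0, snd (prod_decode m)))"

definition structure_of :: "(nat \<Rightarrow> nat) \<Rightarrow> struc" where
  "structure_of g =
    (let s = (\<lambda>k. sig_decode (g (prod_encode (0, k)))) in
     \<lparr> sig = s,
       rel = (\<lambda>k xs. s k = Some (True, length xs) \<and>
                     g (prod_encode (1, prod_encode (k, list_encode xs))) \<noteq> 0),
       fn = (\<lambda>k xs. if s k = Some (False, length xs)
                    then g (prod_encode (2, prod_encode (k, list_encode xs))) else 0) \<rparr>)"

text \<open>The standard effective listing of all computable structures:
  index e names the structure coded by the e-th (oracle-free) partial
  recursive function if that function is total, and nothing otherwise.\<close>
definition Mlist :: "nat \<Rightarrow> struc option" where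
  "Mlist e = (if \<forall>x. converges {} (recf_of_nat e) x
              then Some (structure_of (value_of {} (recf_of_nat e)))
              else None)"

definition iso_indices :: "nat \<Rightarrow> nat \<Rightarrow> bool" where
  "iso_indices i j \<longleftrightarrow> (\<exists>A B. Mlist i = Some A \<and> Mlist j = Some B \<and> isomorphic A B)"

definition structure_at :: "nat \<Rightarrow> struc" where
  "structure_at i = the (Mlist i)"

definition loq_high :: "nat set set \<Rightarrow> bool" where
  "loq_high d \<longleftrightarrow>
     (\<exists>D\<in>d. \<exists>\<Phi>. total3 D \<Phi> \<and>
        (\<forall>i j. iso_indices i j \<longrightarrow>
               is_iso (app3 D \<Phi> i j) (structure_at i) (structure_at j)))"

end

theory Submission
  imports Defs
begin

text \<open>Let \<open>\<phi>(i,j,\<cdot>)\<close> be the isomorphisms computed uniformly in \<open>D\<close>. Naming a finite tuple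
  \<open>a\<close> of \<open>\<M>\<^sub>i\<close> by new constants gives a computable structure \<open>(\<M>\<^sub>i, a)\<close> whose index
  is computable from \<open>i\<close> and \<open>a\<close>, and an isomorphism \<open>(\<M>\<^sub>i, a) \<cong> (\<M>\<^sub>j, b)\<close> is an isomorphism
  \<open>\<M>\<^sub>i \<cong> \<M>\<^sub>j\<close> sending \<open>a\<close> to \<open>b\<close>. A back-and-forth therefore lets \<open>\<phi>\<close> make all
  choices: at stage \<open>t\<close>, with \<open>a \<mapsto> b\<close> built so far, \<open>\<phi>\<close> applied to \<open>(\<M>\<^sub>i, a)\<close> and
  \<open>(\<M>\<^sub>j, b)\<close> gives an image \<open>b'\<close> of \<open>t\<close>, and \<open>\<phi>\<close> applied to \<open>(\<M>\<^sub>j, b' b)\<close> and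
  \<open>(\<M>\<^sub>i, t a)\<close> gives a preimage of \<open>t\<close>. By induction every stage extends to an isomorphism
  \<open>\<M>\<^sub>i \<cong> \<M>\<^sub>j\<close>, so the limit map is an isomorphism, and its inverse is read off the same
  stages. For the symmetric version take this map for \<open>i < j\<close>, its inverse for \<open>i > j\<close> and
  the identity for \<open>i = j\<close>.\<close>

section \<open>Total functions computed by function terms\<close>

abbreviation pe :: "nat \<Rightarrow> nat \<Rightarrow> nat" where "pe a b \<equiv> prod_encode (a, b)"
abbreviation p1 :: "nat \<Rightarrow> nat" where "p1 x \<equiv> fst (prod_decode x)"
abbreviation p2 :: "nat \<Rightarrow> nat" where "p2 x \<equiv> snd (prod_decode x)"

lemma pe_p1_p2 [simp]: "pe (p1 x) (p2 x) = x"
  by (metis prod.collapse prod_decode_inverse)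

inductive_cases eval_CompF_cases: "eval D (CompF f g) x y"
inductive_cases eval_PairF_cases: "eval D (PairF f g) x y"
inductive_cases eval_RecF_cases: "eval D (RecF f g) x y"
inductive_cases eval_MuF_cases: "eval D (MuF f) x y"
inductive_cases eval_atom_cases:
  "eval D ZeroF x y" "eval D SucF x y" "eval D FstF x y" "eval D SndF x y" "eval D OracleF x y"

lemma eval_deterministic: "eval D f x y \<Longrightarrow> eval D f x y' \<Longrightarrow> y' = y"
proof (induction arbitrary: y' rule: eval.induct)
  case (ev_comp g x y f z)
  then show ?case by (metis eval_CompF_cases)
next
  case (ev_pair f x y g z)
  then show ?case by (metis eval_PairF_cases)
next
  case (ev_rec0 f p y g)
  from ev_rec0.prems show ?case
    by (rule eval_RecF_cases) (use ev_rec0.IH in auto)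
next
  case (ev_recS f g p n y z)
  from ev_recS.prems show ?case
    by (rule eval_RecF_cases) (use ev_recS.IH in auto)
next
  case (ev_mu f p n)
  from ev_mu.prems obtain n' where n': "y' = n'" "eval D f (pe p n') 0"
      "\<forall>m<n'. \<exists>y. y \<noteq> 0 \<and> eval D f (pe p m) y"
    by (rule eval_MuF_cases) auto
  show ?case
  proof (rule linorder_cases[of n n'])
    assume "n < n'"
    then show ?thesis using n' ev_mu by force
  next
    assume "n' < n"
    then show ?thesis using n' ev_mu by force
  qed (use n' in auto)
qed (auto elim: eval_atom_cases)

definition computes :: "nat set \<Rightarrow> recf \<Rightarrow> (nat \<Rightarrow> nat) \<Rightarrow> bool" where
  "computes D t F \<longleftrightarrow> (\<forall>x. eval D t x (F x))"

lemma computes_value_of: "computes D t F \<Longrightarrow> value_of D t x = F x"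
  unfolding computes_def value_of_def by (blast intro: the_equality eval_deterministic)

lemma computes_value_of_if_total: "(\<And>x. converges D t x) \<Longrightarrow> computes D t (value_of D t)"
  unfolding computes_def converges_def value_of_def by (metis eval_deterministic theI)

lemma converges_if_computes: "computes D t F \<Longrightarrow> converges D t x"
  unfolding computes_def converges_def by blast

lemma computes_cong: "computes D t F \<Longrightarrow> (\<And>x. F x = G x) \<Longrightarrow> computes D t G"
  unfolding computes_def by metis

definition id_rf :: recf where "id_rf = PairF FstF SndF"
definition const_rf :: "nat \<Rightarrow> recf" where "const_rf n = (CompF SucF ^^ n) ZeroF"

lemma computes_ZeroF: "computes D ZeroF (\<lambda>x. 0)"
  unfolding computes_def by (auto intro: eval.intros)
lemma computes_SucF: "computes D SucF Suc"
  unfolding computes_def by (auto intro: eval.intros)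
lemma computes_FstF: "computes D FstF p1"
  unfolding computes_def by (auto intro: eval.intros)
lemma computes_SndF: "computes D SndF p2"
  unfolding computes_def by (auto intro: eval.intros)
lemma computes_CompF:
  "computes D f F \<Longrightarrow> computes D g G \<Longrightarrow> computes D (CompF f g) (\<lambda>x. F (G x))"
  unfolding computes_def by (auto intro: eval.intros)
lemma computes_PairF:
  "computes D f F \<Longrightarrow> computes D g G \<Longrightarrow> computes D (PairF f g) (\<lambda>x. pe (F x) (G x))"
  unfolding computes_def by (auto intro: eval.intros)
lemma computes_RecF:
  assumes "computes D f F" "computes D g G"
  shows "computes D (RecF f g) (\<lambda>x. rec_nat (F (p1 x)) (\<lambda>n y. G (pe (p1 x) (pe n y))) (p2 x))"
proof -
  have "eval D (RecF f g) (pe p n) (rec_nat (F p) (\<lambda>n y. G (pe p (pe n y))) n)" for p n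
    using assms unfolding computes_def by (induction n) (auto intro: eval.intros)
  then show ?thesis unfolding computes_def by (metis pe_p1_p2)
qed
lemma computes_id_rf: "computes D id_rf (\<lambda>x. x)"
  unfolding id_rf_def by (rule computes_cong, rule computes_PairF[OF computes_FstF computes_SndF]) simp
lemma computes_const_rf: "computes D (const_rf n) (\<lambda>x. n)"
  unfolding const_rf_def
  by (induction n) (auto intro: computes_ZeroF computes_cong[OF computes_CompF[OF computes_SucF]])

definition comp2_rf :: "recf \<Rightarrow> recf \<Rightarrow> recf \<Rightarrow> recf" where
  "comp2_rf h a b = CompF h (PairF a b)"
lemma computes_comp2_rf: "computes D h H \<Longrightarrow> computes D a A \<Longrightarrow> computes D b B \<Longrightarrow>
    computes D (comp2_rf h a b) (\<lambda>x. H (pe (A x) (B x)))"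
  unfolding comp2_rf_def by (rule computes_CompF, assumption, rule computes_PairF)

lemmas computes_basic = computes_ZeroF computes_SucF computes_FstF computes_SndF computes_CompF
  computes_PairF computes_RecF computes_id_rf computes_const_rf computes_comp2_rf

definition unary_rec_rf :: "recf \<Rightarrow> recf" where
  "unary_rec_rf g = CompF (RecF ZeroF g) (PairF ZeroF id_rf)"
lemma computes_unary_rec_rf:
  assumes "computes D g G" and "\<And>n. f n = rec_nat 0 (\<lambda>m y. G (pe 0 (pe m y))) n"
  shows "computes D (unary_rec_rf g) f"
  unfolding unary_rec_rf_def by (rule computes_cong, (rule computes_basic assms(1))+) (simp add: assms(2))

definition add_rf :: recf where "add_rf = RecF id_rf (CompF SucF (CompF SndF SndF))"
lemma computes_add_rf: "computes D add_rf (\<lambda>x. p1 x + p2 x)"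
proof -
  have r: "rec_nat a (\<lambda>n y. Suc y) b = a + b" for a b :: nat by (induction b) auto
  show ?thesis unfolding add_rf_def by (rule computes_cong, (rule computes_basic)+) (simp add: r)
qed

definition pred_rf :: recf where "pred_rf = unary_rec_rf (CompF FstF SndF)"
lemma computes_pred_rf: "computes D pred_rf (\<lambda>x. x - 1)"
proof -
  have r: "rec_nat 0 (\<lambda>n y. n) b = b - 1" for b :: nat by (induction b) auto
  show ?thesis unfolding pred_rf_def
    by (rule computes_unary_rec_rf, (rule computes_basic)+) (simp add: r)
qed

definition diff_rf :: recf where "diff_rf = RecF id_rf (CompF pred_rf (CompF SndF SndF))"
lemma computes_diff_rf: "computes D diff_rf (\<lambda>x. p1 x - p2 x)"
proof -
  have r: "rec_nat a (\<lambda>n y. y - Suc 0) b = a - b" for a b :: nat by (induction b) auto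
  show ?thesis unfolding diff_rf_def
    by (rule computes_cong, (rule computes_basic computes_pred_rf)+) (simp add: r)
qed

definition mult_rf :: recf where "mult_rf = RecF ZeroF (comp2_rf add_rf (CompF SndF SndF) FstF)"
lemma computes_mult_rf: "computes D mult_rf (\<lambda>x. p1 x * p2 x)"
proof -
  have r: "rec_nat 0 (\<lambda>n y. y + a) b = a * b" for a b :: nat by (induction b) auto
  show ?thesis unfolding mult_rf_def
    by (rule computes_cong, (rule computes_basic computes_add_rf)+) (simp add: r)
qed

definition if_zero_rf :: "recf \<Rightarrow> recf \<Rightarrow> recf \<Rightarrow> recf" where
  "if_zero_rf c a b = comp2_rf (RecF FstF (CompF SndF FstF)) (PairF a b) c"
lemma computes_if_zero_rf: "computes D c C \<Longrightarrow> computes D a A \<Longrightarrow> computes D b B \<Longrightarrow>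
    computes D (if_zero_rf c a b) (\<lambda>x. if C x = 0 then A x else B x)"
  unfolding if_zero_rf_def
  by (rule computes_cong, (rule computes_basic | assumption)+) (auto simp: gr0_conv_Suc)

definition mod2_rf :: recf where "mod2_rf = unary_rec_rf (comp2_rf diff_rf (const_rf 1) (CompF SndF SndF))"
lemma computes_mod2_rf: "computes D mod2_rf (\<lambda>x. x mod 2)"
proof -
  have r: "rec_nat 0 (\<lambda>n y. Suc 0 - y) b = b mod 2" for b :: nat by (induction b) (auto simp: mod_Suc)
  show ?thesis unfolding mod2_rf_def
    by (rule computes_unary_rec_rf, (rule computes_basic computes_diff_rf)+) (simp add: r)
qed

definition div2_rf :: recf where
  "div2_rf = unary_rec_rf (comp2_rf add_rf (CompF SndF SndF) (CompF mod2_rf (CompF FstF SndF)))"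
lemma computes_div2_rf: "computes D div2_rf (\<lambda>x. x div 2)"
proof -
  have r: "rec_nat 0 (\<lambda>n y. y + n mod 2) b = b div 2" for b :: nat
    by (induction b) (auto simp: div2_Suc_Suc, presburger)
  show ?thesis unfolding div2_rf_def
    by (rule computes_unary_rec_rf, (rule computes_basic computes_add_rf computes_mod2_rf)+)
      (simp add: r)
qed

definition triangle_rf :: recf where
  "triangle_rf = unary_rec_rf (comp2_rf add_rf (CompF SndF SndF) (CompF SucF (CompF FstF SndF)))"
lemma computes_triangle_rf: "computes D triangle_rf triangle"
proof -
  have r: "rec_nat 0 (\<lambda>n y. Suc (y + n)) b = triangle b" for b :: nat by (induction b) auto
  show ?thesis unfolding triangle_rf_def
    by (rule computes_unary_rec_rf, (rule computes_basic computes_add_rf)+) (simp add: r)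
qed

definition pair_rf :: "recf \<Rightarrow> recf \<Rightarrow> recf" where
  "pair_rf a b = comp2_rf (comp2_rf add_rf (CompF triangle_rf add_rf) FstF) a b"
lemma computes_pair_rf:
  "computes D a A \<Longrightarrow> computes D b B \<Longrightarrow> computes D (pair_rf a b) (\<lambda>x. pe (A x) (B x))"
  unfolding pair_rf_def
  by (rule computes_cong, (rule computes_basic computes_add_rf computes_triangle_rf | assumption)+)
    (simp only: prod_encode_inverse fst_conv snd_conv, simp add: prod_encode_def)

lemmas computes_arith = computes_basic computes_add_rf computes_diff_rf computes_mult_rf
  computes_if_zero_rf computes_mod2_rf computes_div2_rf computes_pair_rf computes_pred_rf

definition list_tl_code :: "nat \<Rightarrow> nat" where "list_tl_code x = p2 (x - 1)"

lemma list_tl_code_Cons [simp]: "list_tl_code (Suc (pe x y)) = y"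
  by (simp add: list_tl_code_def)

lemma funpow_list_tl_code:
  "(list_tl_code ^^ l) (list_encode as) = (if l < length as then list_encode (drop l as) else 0)"
proof (induction l arbitrary: as)
  case 0
  then show ?case by (cases as) auto
next
  case (Suc l)
  have tl_0: "list_tl_code 0 = 0"
    by (simp add: list_tl_code_def prod_decode_def prod_decode_aux.simps)
  have "(list_tl_code ^^ m) 0 = 0" for m
    by (induction m) (auto simp: tl_0)
  then show ?case
    using Suc[of "tl as"] by (cases as) (simp_all add: funpow_Suc_right tl_0 del: funpow.simps)
qed

lemma list_encode_drop_nth: "l < length as \<Longrightarrow>
    list_encode (drop l as) = Suc (pe (as ! l) (list_encode (drop (Suc l) as)))"
  by (simp add: Cons_nth_drop_Suc[symmetric])

definition list_tl_pow_rf :: recf where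
  "list_tl_pow_rf = RecF id_rf (CompF SndF (CompF pred_rf (CompF SndF SndF)))"
lemma computes_list_tl_pow_rf: "computes D list_tl_pow_rf (\<lambda>x. (list_tl_code ^^ p2 x) (p1 x))"
proof -
  have r: "rec_nat a (\<lambda>n y. p2 (y - Suc 0)) b = (list_tl_code ^^ b) a" for a b :: nat
    by (induction b) (auto simp: list_tl_code_def)
  show ?thesis unfolding list_tl_pow_rf_def
    by (rule computes_cong, (rule computes_arith)+) (simp add: r)
qed

declare recf_of_nat.simps [simp del]

primrec recf_code :: "recf \<Rightarrow> nat" where
  "recf_code ZeroF = 0"
| "recf_code SucF = 1"
| "recf_code FstF = 2"
| "recf_code SndF = 3"
| "recf_code OracleF = 4"
| "recf_code (CompF f g) = 9 * pe (recf_code f) (recf_code g) + 5"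
| "recf_code (PairF f g) = 9 * pe (recf_code f) (recf_code g) + 6"
| "recf_code (RecF f g) = 9 * pe (recf_code f) (recf_code g) + 7"
| "recf_code (MuF f) = 9 * recf_code f + 8"

lemma recf_of_nat_recf_code [simp]: "recf_of_nat (recf_code t) = t"
  by (induction t; subst recf_of_nat.simps; simp)

definition comp_code :: "nat \<Rightarrow> nat \<Rightarrow> nat" where "comp_code a b = 9 * pe a b + 5"
definition pair_code :: "nat \<Rightarrow> nat \<Rightarrow> nat" where "pair_code a b = 9 * pe a b + 6"
definition const_code :: "nat \<Rightarrow> nat" where "const_code v = (comp_code 1 ^^ v) 0"

lemma recf_of_nat_comp_code [simp]:
  "recf_of_nat (comp_code a b) = CompF (recf_of_nat a) (recf_of_nat b)"
  unfolding comp_code_def by (subst recf_of_nat.simps) simp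

lemma recf_of_nat_pair_code [simp]:
  "recf_of_nat (pair_code a b) = PairF (recf_of_nat a) (recf_of_nat b)"
  unfolding pair_code_def by (subst recf_of_nat.simps) simp

lemma recf_of_nat_const_code [simp]: "recf_of_nat (const_code v) = const_rf v"
proof (induction v)
  case 0
  then show ?case unfolding const_code_def const_rf_def by (subst recf_of_nat.simps) simp
next
  case (Suc v)
  have "recf_of_nat 1 = SucF" by (subst recf_of_nat.simps) simp
  then show ?case using Suc unfolding const_code_def const_rf_def by simp
qed

definition comp_code_rf :: "recf \<Rightarrow> recf \<Rightarrow> recf" where
  "comp_code_rf a b = comp2_rf add_rf (comp2_rf mult_rf (const_rf 9) (pair_rf a b)) (const_rf 5)"
lemma computes_comp_code_rf: "computes D a A \<Longrightarrow> computes D b B \<Longrightarrow>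
    computes D (comp_code_rf a b) (\<lambda>x. comp_code (A x) (B x))"
  unfolding comp_code_rf_def comp_code_def
  by (rule computes_cong, (rule computes_arith | assumption)+) simp

definition pair_code_rf :: "recf \<Rightarrow> recf \<Rightarrow> recf" where
  "pair_code_rf a b = comp2_rf add_rf (comp2_rf mult_rf (const_rf 9) (pair_rf a b)) (const_rf 6)"
lemma computes_pair_code_rf: "computes D a A \<Longrightarrow> computes D b B \<Longrightarrow>
    computes D (pair_code_rf a b) (\<lambda>x. pair_code (A x) (B x))"
  unfolding pair_code_rf_def pair_code_def
  by (rule computes_cong, (rule computes_arith | assumption)+) simp

definition const_code_rf :: recf where
  "const_code_rf = unary_rec_rf (comp_code_rf (const_rf 1) (CompF SndF SndF))"
lemma computes_const_code_rf: "computes D const_code_rf const_code"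
proof -
  have r: "rec_nat 0 (\<lambda>n. comp_code (Suc 0)) b = const_code b" for b
    by (induction b) (auto simp: const_code_def)
  show ?thesis unfolding const_code_rf_def
    by (rule computes_unary_rec_rf, (rule computes_arith computes_comp_code_rf)+) (simp add: r)
qed

section \<open>Expanding a structure by constants naming a tuple\<close>

definition expansion :: "struc \<Rightarrow> nat list \<Rightarrow> struc" where
  "expansion A as =
    \<lparr>sig = (\<lambda>k. if even k then sig A (k div 2)
                else if k div 2 < length as then Some (False, 0) else None),
     rel = (\<lambda>k xs. even k \<and> rel A (k div 2) xs),
     fn = (\<lambda>k xs. if even k then fn A (k div 2) xs
                 else if k div 2 < length as \<and> xs = [] then as ! (k div 2) else 0)\<rparr>"

lemma is_iso_id: "is_iso id A A"
  unfolding is_iso_def by simp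

lemma is_iso_inv:
  assumes "is_iso F A B"
  shows "is_iso (inv F) B A"
proof -
  have b: "bij F" and sg: "sig A = sig B"
    and r: "\<And>k xs. sig A k = Some (True, length xs) \<Longrightarrow> rel A k xs = rel B k (map F xs)"
    and f: "\<And>k xs. sig A k = Some (False, length xs) \<Longrightarrow> F (fn A k xs) = fn B k (map F xs)"
    using assms unfolding is_iso_def by auto
  have F_inv: "F (inv F y) = y" for y
    using b by (simp add: bij_is_surj surj_f_inv_f)
  show ?thesis unfolding is_iso_def
  proof (intro conjI allI impI)
    show "sig B = sig A" using sg by simp
    show "bij (inv F)" using b by (simp add: bij_imp_bij_inv)
    fix k and xs :: "nat list"
    show "rel B k xs = rel A k (map (inv F) xs)" if "sig B k = Some (True, length xs)"
      using that r[of k "map (inv F) xs"] sg by (simp add: comp_def F_inv)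
    show "inv F (fn B k xs) = fn A k (map (inv F) xs)" if "sig B k = Some (False, length xs)"
    proof -
      have "F (fn A k (map (inv F) xs)) = fn B k xs"
        using that f[of k "map (inv F) xs"] sg by (simp add: comp_def F_inv)
      then show ?thesis by (metis b bij_is_inj inv_f_f)
    qed
  qed
qed

lemma is_iso_inv_f_f: "is_iso F A B \<Longrightarrow> inv F (F x) = x"
  unfolding is_iso_def by (simp add: bij_is_inj)

lemma is_iso_expansion_iff:
  "is_iso F (expansion A as) (expansion B bs) \<longleftrightarrow> is_iso F A B \<and> map F as = bs"
proof
  assume h: "is_iso F (expansion A as) (expansion B bs)"
  have sg: "\<And>k. sig (expansion A as) k = sig (expansion B bs) k"
    using h unfolding is_iso_def by simp
  have len: "length as = length bs"
  proof (rule ccontr)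
    assume "length as \<noteq> length bs"
    then have "(min (length as) (length bs) < length as) \<noteq> (min (length as) (length bs) < length bs)"
      by auto
    then show False
      using sg[of "2 * min (length as) (length bs) + 1"] by (auto simp: expansion_def split: if_splits)
  qed
  have "map F as = bs"
  proof (rule nth_equalityI)
    show "length (map F as) = length bs" using len by simp
    fix l
    assume l: "l < length (map F as)"
    have "sig (expansion A as) (2*l+1) = Some (False, length ([]::nat list))"
      using l by (simp add: expansion_def)
    then have "F (fn (expansion A as) (2*l+1) []) = fn (expansion B bs) (2*l+1) (map F [])"
      using h unfolding is_iso_def by blast
    then show "map F as ! l = bs ! l" using l len by (simp add: expansion_def)
  qed
  moreover have "is_iso F A B" unfolding is_iso_def
  proof (intro conjI allI impI)
    show "sig A = sig B" using sg[of "2 * _"] by (auto simp: expansion_def)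
    show "bij F" using h unfolding is_iso_def by simp
    fix k and xs :: "nat list"
    show "rel A k xs = rel B k (map F xs)" if "sig A k = Some (True, length xs)"
    proof -
      have "sig (expansion A as) (2*k) = Some (True, length xs)"
        using that by (simp add: expansion_def)
      then have "rel (expansion A as) (2*k) xs = rel (expansion B bs) (2*k) (map F xs)"
        using h unfolding is_iso_def by blast
      then show ?thesis by (simp add: expansion_def)
    qed
    show "F (fn A k xs) = fn B k (map F xs)" if "sig A k = Some (False, length xs)"
    proof -
      have "sig (expansion A as) (2*k) = Some (False, length xs)"
        using that by (simp add: expansion_def)
      then have "F (fn (expansion A as) (2*k) xs) = fn (expansion B bs) (2*k) (map F xs)"
        using h unfolding is_iso_def by blast
      then show ?thesis by (simp add: expansion_def)
    qed
  qed
  ultimately show "is_iso F A B \<and> map F as = bs" by simp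
next
  assume h: "is_iso F A B \<and> map F as = bs"
  then have len: "length as = length bs" and nth: "\<And>l. l < length as \<Longrightarrow> F (as ! l) = bs ! l"
    by auto
  show "is_iso F (expansion A as) (expansion B bs)" unfolding is_iso_def
  proof (intro conjI allI impI)
    show "sig (expansion A as) = sig (expansion B bs)"
      using h len unfolding is_iso_def expansion_def by auto
    show "bij F" using h unfolding is_iso_def by simp
    fix k and xs :: "nat list"
    show "rel (expansion A as) k xs = rel (expansion B bs) k (map F xs)"
      if "sig (expansion A as) k = Some (True, length xs)"
      using that h unfolding is_iso_def expansion_def by (auto split: if_splits)
    show "F (fn (expansion A as) k xs) = fn (expansion B bs) k (map F xs)"
      if a: "sig (expansion A as) k = Some (False, length xs)"
    proof (cases "even k")
      case True
      then show ?thesis using a h unfolding is_iso_def expansion_def by auto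
    next
      case False
      then have "k div 2 < length as" "xs = []" using a by (auto simp: expansion_def split: if_splits)
      then show ?thesis using False nth len by (simp add: expansion_def)
    qed
  qed
qed

text \<open>An index of the expansion of \<open>\<M>\<^sub>i\<close> by the tuple coded by \<open>v\<close> is computed by an explicit
  s-m-n construction: the term queries the diagram of \<open>\<M>\<^sub>i\<close> at \<open>expansion_query x\<close> and
  corrects the answer with \<open>expansion_diagram\<close>.\<close>
definition expansion_query :: "nat \<Rightarrow> nat" where
  "expansion_query x =
    (if p1 x = 0 then pe 0 (p2 x div 2) else pe (p1 x) (pe (p1 (p2 x) div 2) (p2 (p2 x))))"

text \<open>The answer \<open>3\<close> codes the signature entry \<open>Some (False, 0)\<close> of a constant.\<close>
definition expansion_diagram :: "nat \<Rightarrow> nat \<Rightarrow> nat \<Rightarrow> nat" where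
  "expansion_diagram y v x =
    (if p1 x = 0 then
       (if p2 x mod 2 = 0 then y else if (list_tl_code ^^ (p2 x div 2)) v = 0 then 0 else 3)
     else if p1 (p2 x) mod 2 = 0 then y
     else p1 ((list_tl_code ^^ (p1 (p2 x) div 2)) v - 1))"

definition expansion_query_rf :: recf where
  "expansion_query_rf = if_zero_rf FstF (pair_rf ZeroF (CompF div2_rf SndF))
     (pair_rf FstF (pair_rf (CompF div2_rf (CompF FstF SndF)) (CompF SndF SndF)))"
lemma computes_expansion_query_rf: "computes D expansion_query_rf expansion_query"
  unfolding expansion_query_rf_def expansion_query_def
  by (rule computes_cong, (rule computes_arith)+) simp

definition expansion_diagram_rf :: recf where
  "expansion_diagram_rf =
    (let y = FstF; v = CompF FstF SndF; x = CompF SndF SndF;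
         c = CompF FstF x; r = CompF SndF x; k = CompF FstF r in
     if_zero_rf c
       (if_zero_rf (CompF mod2_rf r) y
          (if_zero_rf (comp2_rf list_tl_pow_rf v (CompF div2_rf r)) ZeroF (const_rf 3)))
       (if_zero_rf (CompF mod2_rf k) y
          (CompF FstF (CompF pred_rf (comp2_rf list_tl_pow_rf v (CompF div2_rf k))))))"
lemma computes_expansion_diagram_rf:
  "computes D expansion_diagram_rf (\<lambda>z. expansion_diagram (p1 z) (p1 (p2 z)) (p2 (p2 z)))"
  unfolding expansion_diagram_rf_def expansion_diagram_def Let_def
  by (rule computes_cong, (rule computes_arith computes_list_tl_pow_rf)+) simp

definition expansion_rf :: "recf \<Rightarrow> recf \<Rightarrow> recf" where
  "expansion_rf g v = CompF expansion_diagram_rf (PairF (CompF g expansion_query_rf) (PairF v id_rf))"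
lemma computes_expansion_rf: "computes D g G \<Longrightarrow>
    computes D (expansion_rf g (const_rf v)) (\<lambda>x. expansion_diagram (G (expansion_query x)) v x)"
  unfolding expansion_rf_def
  by (rule computes_cong,
      (rule computes_arith computes_expansion_diagram_rf computes_expansion_query_rf | assumption)+)
    simp

definition expansion_index :: "nat \<Rightarrow> nat \<Rightarrow> nat" where
  "expansion_index i v = comp_code (recf_code expansion_diagram_rf)
     (pair_code (comp_code i (recf_code expansion_query_rf)) (pair_code (const_code v) (recf_code id_rf)))"

lemma recf_of_nat_expansion_index:
  "recf_of_nat (expansion_index i v) = expansion_rf (recf_of_nat i) (const_rf v)"
  unfolding expansion_index_def expansion_rf_def by simp

definition expansion_index_rf :: "recf \<Rightarrow> recf \<Rightarrow> recf" where
  "expansion_index_rf i v = comp_code_rf (const_rf (recf_code expansion_diagram_rf))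
     (pair_code_rf (comp_code_rf i (const_rf (recf_code expansion_query_rf)))
        (pair_code_rf (CompF const_code_rf v) (const_rf (recf_code id_rf))))"
lemma computes_expansion_index_rf: "computes D i I \<Longrightarrow> computes D v V \<Longrightarrow>
    computes D (expansion_index_rf i v) (\<lambda>x. expansion_index (I x) (V x))"
  unfolding expansion_index_rf_def expansion_index_def
  by (rule computes_cong, (rule computes_arith computes_comp_code_rf computes_pair_code_rf
      computes_const_code_rf | assumption)+) simp

lemma structure_of_expansion_diagram:
  "structure_of (\<lambda>x. expansion_diagram (g (expansion_query x)) (list_encode as) x)
     = expansion (structure_of g) as"
proof -
  have "pe 1 0 = 2" by (simp add: prod_encode_def numeral_2_eq_2)
  then have prod_decode_2: "prod_decode 2 = (1, 0)" by (metis prod_encode_inverse)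
  have s: "sig_decode (expansion_diagram (g (expansion_query (pe 0 k))) (list_encode as) (pe 0 k)) =
     (if even k then sig_decode (g (pe 0 (k div 2)))
      else if k div 2 < length as then Some (False, 0) else None)" for k
    by (auto simp: expansion_diagram_def expansion_query_def funpow_list_tl_code sig_decode_def
        prod_decode_2 even_iff_mod_2_eq_zero list_encode_drop_nth)
  show ?thesis
    unfolding structure_of_def expansion_def Let_def s
    by (simp add: fun_eq_iff)
      (auto simp: expansion_diagram_def expansion_query_def funpow_list_tl_code
        even_iff_mod_2_eq_zero list_encode_drop_nth)
qed

lemma Mlist_expansion_index:
  assumes "Mlist i = Some A"
  shows "Mlist (expansion_index i (list_encode as)) = Some (expansion A as)"
proof -
  let ?g = "value_of {} (recf_of_nat i)"
  let ?h = "\<lambda>x. expansion_diagram (?g (expansion_query x)) (list_encode as) x"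
  have "\<forall>x. converges {} (recf_of_nat i) x" and A: "A = structure_of ?g"
    using assms unfolding Mlist_def by (auto split: if_splits)
  then have c: "computes {} (recf_of_nat (expansion_index i (list_encode as))) ?h"
    unfolding recf_of_nat_expansion_index
    by (intro computes_expansion_rf computes_value_of_if_total) blast
  then have "value_of {} (recf_of_nat (expansion_index i (list_encode as))) = ?h"
    and "\<forall>x. converges {} (recf_of_nat (expansion_index i (list_encode as))) x"
    using computes_value_of converges_if_computes by blast+
  then show ?thesis unfolding Mlist_def A by (simp add: structure_of_expansion_diagram)
qed

section \<open>The back-and-forth driven by a uniform choice of isomorphisms\<close>

definition selects_isos :: "(nat \<Rightarrow> nat) \<Rightarrow> bool" where
  "selects_isos \<phi> \<longleftrightarrow> (\<forall>i j. iso_indices i j \<longrightarrow>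
     is_iso (\<lambda>n. \<phi> (code3 i j n)) (structure_at i) (structure_at j))"

definition is_iso_with_inverse :: "(nat \<Rightarrow> nat) \<Rightarrow> (nat \<Rightarrow> nat) \<Rightarrow> struc \<Rightarrow> struc \<Rightarrow> bool" where
  "is_iso_with_inverse f g A B \<longleftrightarrow> is_iso f A B \<and> g \<circ> f = id \<and> f \<circ> g = id"

lemma selects_isos_expansion:
  assumes "selects_isos \<phi>" and "Mlist i = Some A" and "Mlist j = Some B"
    and "is_iso F A B" and "map F as = bs"
  defines "F' \<equiv> \<lambda>n. \<phi> (code3 (expansion_index i (list_encode as)) (expansion_index j (list_encode bs)) n)"
  shows "is_iso F' A B \<and> map F' as = bs"
proof -
  note M = Mlist_expansion_index[OF assms(2), of as] Mlist_expansion_index[OF assms(3), of bs]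
  have "iso_indices (expansion_index i (list_encode as)) (expansion_index j (list_encode bs))"
    unfolding iso_indices_def isomorphic_def using M assms(4,5) is_iso_expansion_iff by blast
  then have "is_iso F' (structure_at (expansion_index i (list_encode as)))
      (structure_at (expansion_index j (list_encode bs)))"
    using assms(1) unfolding selects_isos_def F'_def by blast
  then have "is_iso F' (expansion A as) (expansion B bs)"
    using M unfolding structure_at_def by simp
  then show ?thesis using is_iso_expansion_iff by blast
qed

text \<open>Stage \<open>t\<close> is a partial map \<open>as \<mapsto> bs\<close> given by two lists of length \<open>2 t\<close>, newest
  entries first; stage \<open>t + 1\<close> pairs \<open>t\<close> with its image and the preimage of \<open>t\<close> with \<open>t\<close>.\<close>
primrec bf_stages :: "(nat \<Rightarrow> nat) \<Rightarrow> nat \<Rightarrow> nat \<Rightarrow> nat \<Rightarrow> nat list \<times> nat list" where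
  "bf_stages \<phi> i j 0 = ([], [])"
| "bf_stages \<phi> i j (Suc t) =
    (let as = fst (bf_stages \<phi> i j t); bs = snd (bf_stages \<phi> i j t);
         b = \<phi> (code3 (expansion_index i (list_encode as)) (expansion_index j (list_encode bs)) t);
         x = \<phi> (code3 (expansion_index j (list_encode (b # bs))) (expansion_index i (list_encode (t # as))) t)
     in (x # t # as, t # b # bs))"

definition bf_iso :: "(nat \<Rightarrow> nat) \<Rightarrow> nat \<Rightarrow> nat \<Rightarrow> nat \<Rightarrow> nat" where
  "bf_iso \<phi> i j t = snd (bf_stages \<phi> i j (Suc t)) ! 1"

definition bf_iso_inv :: "(nat \<Rightarrow> nat) \<Rightarrow> nat \<Rightarrow> nat \<Rightarrow> nat \<Rightarrow> nat" where
  "bf_iso_inv \<phi> i j t = fst (bf_stages \<phi> i j (Suc t)) ! 0"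

lemma bf_stages_drop:
  "t \<le> s \<Longrightarrow> fst (bf_stages \<phi> i j t) = drop (2 * (s - t)) (fst (bf_stages \<phi> i j s)) \<and>
     snd (bf_stages \<phi> i j t) = drop (2 * (s - t)) (snd (bf_stages \<phi> i j s))"
proof (induction s)
  case (Suc s)
  show ?case
  proof (cases "t = Suc s")
    case False
    then have "t \<le> s" and "Suc s - t = Suc (s - t)" using Suc.prems by auto
    then show ?thesis using Suc.IH by (simp add: Let_def)
  qed simp
qed simp

lemma bf_stages_extend_to_iso:
  assumes \<phi>: "selects_isos \<phi>" and A: "Mlist i = Some A" and B: "Mlist j = Some B"
    and "isomorphic A B"
  shows "\<exists>F. is_iso F A B \<and> map F (fst (bf_stages \<phi> i j t)) = snd (bf_stages \<phi> i j t)"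
proof (induction t)
  case 0
  then show ?case using \<open>isomorphic A B\<close> unfolding isomorphic_def by simp
next
  case (Suc t)
  define as where "as = fst (bf_stages \<phi> i j t)"
  define bs where "bs = snd (bf_stages \<phi> i j t)"
  define F where "F = (\<lambda>n. \<phi> (code3 (expansion_index i (list_encode as)) (expansion_index j (list_encode bs)) n))"
  define b where "b = F t"
  define G where "G = (\<lambda>n. \<phi> (code3 (expansion_index j (list_encode (b # bs))) (expansion_index i (list_encode (t # as))) n))"
  obtain F0 where "is_iso F0 A B" "map F0 as = bs"
    using Suc unfolding as_def bs_def by blast
  then have "is_iso F A B \<and> map F as = bs"
    unfolding F_def by (rule selects_isos_expansion[OF \<phi> A B])
  then have F: "is_iso F A B" "map F as = bs" by auto
  then have "map (inv F) (b # bs) = t # as"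
    unfolding b_def by (auto simp: comp_def is_iso_inv_f_f[OF F(1)])
  then have "is_iso G B A \<and> map G (b # bs) = t # as"
    unfolding G_def by (rule selects_isos_expansion[OF \<phi> B A is_iso_inv[OF F(1)]])
  then have G: "is_iso G B A" "map G (b # bs) = t # as" by auto
  then have "map (inv G) (t # as) = b # bs"
    by (metis (no_types) G(2) is_iso_inv_f_f map_idI map_map comp_apply)
  then have "map (inv G) (G t # t # as) = t # b # bs"
    by (simp add: is_iso_inv_f_f[OF G(1)])
  moreover have "bf_stages \<phi> i j (Suc t) = (G t # t # as, t # b # bs)"
    unfolding as_def bs_def G_def b_def F_def by (simp add: Let_def)
  ultimately show ?case using is_iso_inv[OF G(1)] by auto
qed

lemma bf_iso_finite_approximations:
  assumes "selects_isos \<phi>" and "Mlist i = Some A" and "Mlist j = Some B" and "isomorphic A B"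
  shows "\<exists>F. is_iso F A B \<and> (\<forall>t<N. F t = bf_iso \<phi> i j t \<and> F (bf_iso_inv \<phi> i j t) = t)"
proof -
  obtain F where F: "is_iso F A B" "map F (fst (bf_stages \<phi> i j N)) = snd (bf_stages \<phi> i j N)"
    using bf_stages_extend_to_iso[OF assms] by blast
  have "F t = bf_iso \<phi> i j t \<and> F (bf_iso_inv \<phi> i j t) = t" if "t < N" for t
  proof -
    from that have "Suc t \<le> N" by simp
    from bf_stages_drop[OF this, of \<phi> i j] F(2)
    have "map F (fst (bf_stages \<phi> i j (Suc t))) = snd (bf_stages \<phi> i j (Suc t))"
      by (simp add: drop_map[symmetric])
    then show ?thesis unfolding bf_iso_def bf_iso_inv_def by (simp add: Let_def)
  qed
  then show ?thesis using F(1) by blast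
qed

text \<open>Each instance of the isomorphism conditions involves only finitely many points.\<close>
lemma is_iso_with_inverse_if_approximated:
  assumes approx: "\<And>N. \<exists>F. is_iso F A B \<and> (\<forall>t<N. F t = h t \<and> F (g t) = t)"
  shows "is_iso_with_inverse h g A B"
proof -
  have "h (g y) = y" for y
    using approx[of "Suc (y + g y)"] by (metis add.commute less_Suc_eq_le le_add1 le_add2)
  moreover have "g (h x) = x" for x
  proof -
    obtain F where F: "is_iso F A B" "\<forall>t<Suc (x + h x). F t = h t \<and> F (g t) = t"
      using approx by blast
    then have "F x = h x" "F (g (h x)) = h x" by auto
    then show ?thesis using is_iso_inv_f_f[OF F(1)] by metis
  qed
  ultimately have inverses: "g \<circ> h = id" "h \<circ> g = id" by (auto simp: fun_eq_iff)
  have "is_iso h A B" unfolding is_iso_def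
  proof (intro conjI allI impI)
    obtain F where "is_iso F A B" using approx by blast
    then show "sig A = sig B" unfolding is_iso_def by simp
    show "bij h" using o_bij[OF inverses] .
    fix k and xs :: "nat list"
    obtain F where F: "is_iso F A B" "\<forall>t<Suc (sum_list xs + fn A k xs). F t = h t"
      using approx by blast
    have args: "map F xs = map h xs"
    proof (intro map_cong refl)
      fix x
      assume "x \<in> set xs"
      then have "x < Suc (sum_list xs + fn A k xs)" using member_le_sum_list[of x xs] by simp
      then show "F x = h x" using F(2) by blast
    qed
    have val: "F (fn A k xs) = h (fn A k xs)" using F(2) by auto
    show "rel A k xs = rel B k (map h xs)" if "sig A k = Some (True, length xs)"
      using F(1) that args unfolding is_iso_def by metis
    show "h (fn A k xs) = fn B k (map h xs)" if "sig A k = Some (False, length xs)"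
      using F(1) that args val unfolding is_iso_def by metis
  qed
  then show ?thesis using inverses unfolding is_iso_with_inverse_def by simp
qed

lemma bf_iso_is_iso_with_inverse:
  assumes "selects_isos \<phi>" and "iso_indices i j"
  shows "is_iso_with_inverse (bf_iso \<phi> i j) (bf_iso_inv \<phi> i j) (structure_at i) (structure_at j)"
  using assms(2) is_iso_with_inverse_if_approximated[OF bf_iso_finite_approximations[OF assms(1)]]
  unfolding iso_indices_def structure_at_def by auto

lemma is_iso_with_inverse_swap:
  assumes "is_iso_with_inverse f g A B"
  shows "is_iso_with_inverse g f B A"
proof -
  have "inv f = g" using assms inv_unique_comp unfolding is_iso_with_inverse_def by blast
  then show ?thesis using assms is_iso_inv unfolding is_iso_with_inverse_def by metis
qed

definition symmetrize :: "(nat \<Rightarrow> nat \<Rightarrow> nat \<Rightarrow> nat) \<Rightarrow> (nat \<Rightarrow> nat \<Rightarrow> nat \<Rightarrow> nat) \<Rightarrow>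
    nat \<Rightarrow> nat \<Rightarrow> nat \<Rightarrow> nat" where
  "symmetrize h g i j n = (if i = j then n else if j < i then g j i n else h i j n)"

lemma is_iso_with_inverse_symmetrize:
  assumes hg: "\<And>i j. iso_indices i j \<Longrightarrow>
      is_iso_with_inverse (h i j) (g i j) (structure_at i) (structure_at j)"
    and "iso_indices i j"
  shows "is_iso_with_inverse (symmetrize h g i j) (symmetrize h g j i) (structure_at i) (structure_at j)"
proof (cases i j rule: linorder_cases)
  case less
  then have "symmetrize h g i j = h i j" "symmetrize h g j i = g i j"
    by (auto simp: symmetrize_def fun_eq_iff)
  then show ?thesis using hg[OF \<open>iso_indices i j\<close>] by simp
next
  case equal
  have "symmetrize h g i i = id" by (simp add: symmetrize_def fun_eq_iff)
  then show ?thesis using equal is_iso_id unfolding is_iso_with_inverse_def by simp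
next
  case greater
  have "iso_indices j i"
    using \<open>iso_indices i j\<close> is_iso_inv unfolding iso_indices_def isomorphic_def by blast
  moreover have "symmetrize h g i j = g j i" "symmetrize h g j i = h j i"
    using greater by (auto simp: symmetrize_def fun_eq_iff)
  ultimately show ?thesis using is_iso_with_inverse_swap[OF hg] by simp
qed

section \<open>Computing the back-and-forth from the oracle\<close>

definition computes3 :: "nat set \<Rightarrow> recf \<Rightarrow> (nat \<Rightarrow> nat \<Rightarrow> nat \<Rightarrow> nat) \<Rightarrow> bool" where
  "computes3 D T f \<longleftrightarrow> computes D T (\<lambda>z. f (p1 z) (p1 (p2 z)) (p2 (p2 z)))"

lemma total3_if_computes3: "computes3 D T f \<Longrightarrow> total3 D T"
  unfolding computes3_def total3_def by (blast intro: converges_if_computes)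

lemma app3_if_computes3: "computes3 D T f \<Longrightarrow> app3 D T i j = f i j"
  unfolding computes3_def app3_def by (simp add: computes_value_of code3_def fun_eq_iff)

lemma computes_selects_isos:
  assumes "total3 D \<Phi>"
    and "\<forall>i j. iso_indices i j \<longrightarrow> is_iso (app3 D \<Phi> i j) (structure_at i) (structure_at j)"
  shows "computes D \<Phi> (value_of D \<Phi>)" and "selects_isos (value_of D \<Phi>)"
proof -
  have "converges D \<Phi> x" for x
    using assms(1) unfolding total3_def code3_def by (metis pe_p1_p2)
  then show "computes D \<Phi> (value_of D \<Phi>)" by (rule computes_value_of_if_total)
  show "selects_isos (value_of D \<Phi>)" using assms(2) unfolding selects_isos_def app3_def by simp
qed

definition symmetrize_rf :: "recf \<Rightarrow> recf \<Rightarrow> recf" where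
  "symmetrize_rf H G =
    (let i = FstF; j = CompF FstF SndF; n = CompF SndF SndF in
     if_zero_rf (comp2_rf add_rf (comp2_rf diff_rf i j) (comp2_rf diff_rf j i)) n
       (if_zero_rf (comp2_rf diff_rf j i) (CompF G (pair_rf j (pair_rf i n))) H))"

lemma computes3_symmetrize_rf:
  "computes3 D H h \<Longrightarrow> computes3 D G g \<Longrightarrow> computes3 D (symmetrize_rf H G) (symmetrize h g)"
  unfolding computes3_def symmetrize_rf_def Let_def
  by (rule computes_cong, (rule computes_arith | assumption)+) (auto simp: symmetrize_def)

text \<open>One stage on codes: the argument \<open>s\<close> is \<open>pe (list_encode as) (list_encode bs)\<close>.\<close>
definition bf_step_code :: "(nat \<Rightarrow> nat) \<Rightarrow> nat \<Rightarrow> nat \<Rightarrow> nat \<Rightarrow> nat \<Rightarrow> nat" where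
  "bf_step_code \<phi> i j t s =
    (let a = p1 s; b = p2 s;
         y = \<phi> (code3 (expansion_index i a) (expansion_index j b) t);
         x = \<phi> (code3 (expansion_index j (Suc (pe y b))) (expansion_index i (Suc (pe t a))) t)
     in pe (Suc (pe x (Suc (pe t a)))) (Suc (pe t (Suc (pe y b)))))"

lemma rec_nat_bf_step_code:
  "rec_nat 0 (bf_step_code \<phi> i j) t =
     pe (list_encode (fst (bf_stages \<phi> i j t))) (list_encode (snd (bf_stages \<phi> i j t)))"
proof (induction t)
  case 0
  show ?case by (simp add: prod_encode_def)
qed (simp add: bf_step_code_def Let_def)

definition cons_rf :: "recf \<Rightarrow> recf \<Rightarrow> recf" where "cons_rf a b = CompF SucF (pair_rf a b)"
lemma computes_cons_rf:
  "computes D a A \<Longrightarrow> computes D b B \<Longrightarrow> computes D (cons_rf a b) (\<lambda>x. Suc (pe (A x) (B x)))"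
  unfolding cons_rf_def by (rule computes_cong, (rule computes_arith | assumption)+) simp

definition code3_rf :: "recf \<Rightarrow> recf \<Rightarrow> recf \<Rightarrow> recf" where
  "code3_rf a b c = pair_rf a (pair_rf b c)"
lemma computes_code3_rf: "computes D a A \<Longrightarrow> computes D b B \<Longrightarrow> computes D c C \<Longrightarrow>
    computes D (code3_rf a b c) (\<lambda>x. code3 (A x) (B x) (C x))"
  unfolding code3_rf_def code3_def by (rule computes_cong, (rule computes_arith | assumption)+) simp

definition bf_step_rf :: "recf \<Rightarrow> recf" where
  "bf_step_rf \<Phi> =
    (let i = CompF FstF FstF; j = CompF SndF FstF; t = CompF FstF SndF;
         a = CompF FstF (CompF SndF SndF); b = CompF SndF (CompF SndF SndF);
         y = CompF \<Phi> (code3_rf (expansion_index_rf i a) (expansion_index_rf j b) t);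
         x = CompF \<Phi> (code3_rf (expansion_index_rf j (cons_rf y b)) (expansion_index_rf i (cons_rf t a)) t)
     in pair_rf (cons_rf x (cons_rf t a)) (cons_rf t (cons_rf y b)))"

definition bf_stages_rf :: "recf \<Rightarrow> recf" where "bf_stages_rf \<Phi> = RecF ZeroF (bf_step_rf \<Phi>)"

lemma computes_bf_stages_rf:
  assumes "computes D \<Phi> \<phi>"
  shows "computes D (bf_stages_rf \<Phi>) (\<lambda>x.
    pe (list_encode (fst (bf_stages \<phi> (p1 (p1 x)) (p2 (p1 x)) (p2 x))))
       (list_encode (snd (bf_stages \<phi> (p1 (p1 x)) (p2 (p1 x)) (p2 x)))))"
proof -
  have "computes D (bf_step_rf \<Phi>)
      (\<lambda>z. bf_step_code \<phi> (p1 (p1 z)) (p2 (p1 z)) (p1 (p2 z)) (p2 (p2 z)))"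
    unfolding bf_step_rf_def Let_def
    by (rule computes_cong, (rule computes_arith computes_cons_rf computes_code3_rf
        computes_expansion_index_rf assms)+) (simp add: bf_step_code_def Let_def)
  then show ?thesis unfolding bf_stages_rf_def
    by (rule computes_cong[OF computes_RecF[OF computes_ZeroF]]) (simp flip: rec_nat_bf_step_code)
qed

definition bf_final_stage_rf :: "recf \<Rightarrow> recf" where
  "bf_final_stage_rf \<Phi> =
    CompF (bf_stages_rf \<Phi>) (pair_rf (pair_rf FstF (CompF FstF SndF)) (CompF SucF (CompF SndF SndF)))"

definition bf_iso_rf :: "recf \<Rightarrow> recf" where
  "bf_iso_rf \<Phi> = CompF FstF (CompF pred_rf (CompF SndF (CompF pred_rf (CompF SndF (bf_final_stage_rf \<Phi>)))))"

definition bf_iso_inv_rf :: "recf \<Rightarrow> recf" where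
  "bf_iso_inv_rf \<Phi> = CompF FstF (CompF pred_rf (CompF FstF (bf_final_stage_rf \<Phi>)))"

lemma computes3_bf_iso_rf: "computes D \<Phi> \<phi> \<Longrightarrow> computes3 D (bf_iso_rf \<Phi>) (bf_iso \<phi>)"
  unfolding computes3_def bf_iso_rf_def bf_final_stage_rf_def
  by (rule computes_cong, (rule computes_arith computes_bf_stages_rf | assumption)+)
    (simp add: bf_iso_def Let_def)

lemma computes3_bf_iso_inv_rf: "computes D \<Phi> \<phi> \<Longrightarrow> computes3 D (bf_iso_inv_rf \<Phi>) (bf_iso_inv \<phi>)"
  unfolding computes3_def bf_iso_inv_rf_def bf_final_stage_rf_def
  by (rule computes_cong, (rule computes_arith computes_bf_stages_rf | assumption)+)
    (simp add: bf_iso_inv_def Let_def)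

theorem mainTheorem3:
  assumes "is_turing_degree d"
    and "loq_high d"
  shows "(\<exists>D\<in>d. \<exists>\<Phi> \<Psi>. total3 D \<Phi> \<and> total3 D \<Psi> \<and>
            (\<forall>i j. iso_indices i j \<longrightarrow>
               is_iso (app3 D \<Phi> i j) (structure_at i) (structure_at j) \<and>
               app3 D \<Psi> i j \<circ> app3 D \<Phi> i j = id \<and>
               app3 D \<Phi> i j \<circ> app3 D \<Psi> i j = id))
       \<and> (\<exists>D\<in>d. \<exists>\<Theta>. total3 D \<Theta> \<and>
            (\<forall>i j. iso_indices i j \<longrightarrow>
               is_iso (app3 D \<Theta> i j) (structure_at i) (structure_at j) \<and>
               app3 D \<Theta> j i \<circ> app3 D \<Theta> i j = id \<and>
               app3 D \<Theta> i j \<circ> app3 D \<Theta> j i = id))"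
proof -
  obtain D \<Phi> where "D \<in> d" and total: "total3 D \<Phi>"
    and isos: "\<forall>i j. iso_indices i j \<longrightarrow> is_iso (app3 D \<Phi> i j) (structure_at i) (structure_at j)"
    using assms(2) unfolding loq_high_def by blast
  note \<Phi> = computes_selects_isos(1)[OF total isos]
    and sel = computes_selects_isos(2)[OF total isos]
  let ?h = "bf_iso (value_of D \<Phi>)" and ?g = "bf_iso_inv (value_of D \<Phi>)"
  let ?H = "bf_iso_rf \<Phi>" and ?G = "bf_iso_inv_rf \<Phi>"
  let ?\<Theta> = "symmetrize_rf ?H ?G"
  have H: "computes3 D ?H ?h" and G: "computes3 D ?G ?g"
    using computes3_bf_iso_rf[OF \<Phi>] computes3_bf_iso_inv_rf[OF \<Phi>] .
  then have \<Theta>: "computes3 D ?\<Theta> (symmetrize ?h ?g)" by (rule computes3_symmetrize_rf)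
  have bf: "iso_indices i j \<Longrightarrow>
      is_iso_with_inverse (?h i j) (?g i j) (structure_at i) (structure_at j)" for i j
    by (rule bf_iso_is_iso_with_inverse[OF sel])
  have "\<forall>i j. iso_indices i j \<longrightarrow> is_iso (app3 D ?H i j) (structure_at i) (structure_at j) \<and>
      app3 D ?G i j \<circ> app3 D ?H i j = id \<and> app3 D ?H i j \<circ> app3 D ?G i j = id"
    using bf unfolding app3_if_computes3[OF H] app3_if_computes3[OF G] is_iso_with_inverse_def
    by blast
  moreover have "\<forall>i j. iso_indices i j \<longrightarrow>
      is_iso (app3 D ?\<Theta> i j) (structure_at i) (structure_at j) \<and>
      app3 D ?\<Theta> j i \<circ> app3 D ?\<Theta> i j = id \<and> app3 D ?\<Theta> i j \<circ> app3 D ?\<Theta> j i = id"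
    using is_iso_with_inverse_symmetrize[OF bf]
    unfolding app3_if_computes3[OF \<Theta>] is_iso_with_inverse_def by blast
  ultimately show ?thesis
    using \<open>D \<in> d\<close> total3_if_computes3[OF H] total3_if_computes3[OF G] total3_if_computes3[OF \<Theta>]
    by blast
qed

end
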